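(* Let $V$ be a vector space over $\mathbb{F}_2$ of finite dimension $n>1$, let $e=(e_i)_{i=1}^n$ be a basis of $V$, set $e_0=\sum_{i=1}^n e_i$ and \[ \xi_e=n+1+\sum_{i=0}^n X^{e_i}\in\mathbb{F}_2[V]. \] Then $\xi_e\in I^2[V]$ and $\mathrm{Pf}_2(\xi_e)=n-1$.
   Context: $\mathbb{F}_2[V]$ is the group algebra of $V$, elements $\sum_{v\in V}\alpha_vX^v$, $X^0=1$, $X^uX^v=X^{u+v}$; integers denote multiples of $1$ in $\mathbb{F}_2$. $I[V]$ is the kernel of the augmentation map $\sum\alpha_vX^v\mapsto\sum\alpha_v$, and $I^2[V]$ its square. A $2$-fold Pfister element is a product $(1+X^{u})(1+X^{v})$ with $u,v\in V$. For $\xi\in I^2[V]$, $\mathrm{Pf}_2(\xi)$ is the minimal number of terms in an expression of $\xi$ as a sum of $2$-fold Pfister elements. *)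

theory Defs
  imports Main "HOL-Library.Z2" "HOL-Library.Poly_Mapping"
begin

text \<open>The group algebra F_2[V] of an additive group V is the monoid algebra
  finitely supported functions, convolution product).\<close>

type_synonym 'v galg = "'v \<Rightarrow>\<^sub>0 bit"

definition X :: "'v::monoid_add \<Rightarrow> 'v galg" where
  "X v = Poly_Mapping.single v 1"

definition augmentation :: "'v galg \<Rightarrow> bit" where
  "augmentation \<xi> = (\<Sum>v\<in>Poly_Mapping.keys \<xi>. Poly_Mapping.lookup \<xi> v)"

definition augI :: "'v::monoid_add galg set" where
  "augI = {\<xi>. augmentation \<xi> = 0}"

definition augI2 :: "'v::monoid_add galg set" where
  "augI2 = {\<xi>. \<exists>k (a :: nat \<Rightarrow> 'v galg) b. (\<forall>i<k. a i \<in> augI \<and> b i \<in> augI)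
                 \<and> \<xi> = (\<Sum>i<k. a i * b i)}"

definition pfister2 :: "'v::monoid_add \<Rightarrow> 'v \<Rightarrow> 'v galg" where
  "pfister2 u v = (1 + X u) * (1 + X v)"

definition Pf2 :: "'v::monoid_add galg \<Rightarrow> nat" where
  "Pf2 \<xi> = (LEAST k. \<exists>u w :: nat \<Rightarrow> 'v. \<xi> = (\<Sum>i<k. pfister2 (u i) (w i)))"

end

theory Submission
  imports Defs
begin

text \<open>The upper bound is a telescoping sum: with s_m = e_1 + ... + e_m, the element xi_e is
  the sum of the n - 1 Pfister elements (1 + X^{s_m})(1 + X^{e_{m+1}}). For the lower bound write
  xi_e as a sum of k Pfister elements (1 + X^{u_i})(1 + X^{w_i}) and view the triples
  {u_i, w_i, u_i + w_i} as hyperedges. Grow a set C containing e_0 one triple at a time until every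
  triple lies inside C or misses it; each step costs at most one new generator, so C lies in the
  span of k + 1 vectors. The additive map \<open>\<xi> \<mapsto> \<Sum>(C \<inter> supp \<xi>)\<close> kills every Pfister
  element, as the vectors of a triple sum to 0, and sends xi_e to the sum of the e_i outside C.
  By independence all e_i lie in C, so V is spanned by k + 1 vectors and n \<le> k + 1.\<close>

lemma galg_add_self [simp]: "(f::'v galg) + f = 0"
  by (rule poly_mapping_eqI) (simp add: lookup_add)

lemma keys_add_galg:
  "Poly_Mapping.keys ((f::'v galg) + g) = sym_diff (Poly_Mapping.keys f) (Poly_Mapping.keys g)"
proof -
  have "(a::bit) + b \<noteq> 0 \<longleftrightarrow> (a \<noteq> 0 \<longleftrightarrow> b = 0)" for a b
    by (cases a; cases b) simp_all
  then show ?thesis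
    by (auto simp: in_keys_iff lookup_add)
qed

lemma X_add: "X (u + w) = X u * X (w::'v::monoid_add)"
  by (simp add: X_def mult_single)

lemma X_zero [simp]: "X 0 = 1"
  by (simp add: X_def)

lemma keys_X [simp]: "Poly_Mapping.keys (X v) = {v}"
  by (simp add: X_def)

lemma pfister2_expand: "pfister2 u w = 1 + X u + X w + X (u + (w::'v::comm_monoid_add))"
  by (simp add: pfister2_def X_add algebra_simps)

lemma augmentation_eq_sum:
  assumes "finite S" "Poly_Mapping.keys \<xi> \<subseteq> S"
  shows "augmentation \<xi> = (\<Sum>v\<in>S. Poly_Mapping.lookup \<xi> v)"
  unfolding augmentation_def using assms
  by (intro sum.mono_neutral_left) (auto simp: in_keys_iff)

lemma augmentation_add: "augmentation (\<xi> + \<eta>) = augmentation \<xi> + augmentation \<eta>"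
proof -
  let ?S = "Poly_Mapping.keys \<xi> \<union> Poly_Mapping.keys \<eta>"
  have "augmentation (\<xi> + \<eta>) = (\<Sum>v\<in>?S. Poly_Mapping.lookup (\<xi> + \<eta>) v)"
    using keys_add by (rule augmentation_eq_sum[rotated]) simp
  also have "\<dots> = (\<Sum>v\<in>?S. Poly_Mapping.lookup \<xi> v) + (\<Sum>v\<in>?S. Poly_Mapping.lookup \<eta> v)"
    by (simp only: lookup_add sum.distrib)
  also have "\<dots> = augmentation \<xi> + augmentation \<eta>"
    by (simp only: augmentation_eq_sum[of ?S] finite_keys finite_Un Un_upper1 Un_upper2)
  finally show ?thesis .
qed

lemma augmentation_X [simp]: "augmentation (X v) = 1"
  by (simp add: augmentation_def X_def)

lemma one_plus_X_in_augI: "1 + X (v::'v::monoid_add) \<in> augI"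
  using augmentation_X[of 0] by (simp add: augI_def augmentation_add)

lemma pfister2_sum_in_augI2: "(\<Sum>i<(k::nat). pfister2 (u i) (w i)) \<in> augI2"
  unfolding augI2_def pfister2_def
  by (intro CollectI exI[where x = k] exI[where x = "\<lambda>i. 1 + X (u i)"]
      exI[where x = "\<lambda>i. 1 + X (w i)"] conjI) (simp_all add: one_plus_X_in_augI)

text \<open>In characteristic 2 this is the subgroup generated by \<open>G\<close>.\<close>

definition subset_sums :: "'v::comm_monoid_add set \<Rightarrow> 'v set" where
  "subset_sums G = Sum ` {A. A \<subseteq> G \<and> finite A}"

lemma zero_in_subset_sums: "0 \<in> subset_sums G"
  unfolding subset_sums_def by (rule image_eqI[of _ _ "{}"]) auto

lemma subset_sums_base: "x \<in> G \<Longrightarrow> x \<in> subset_sums G"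
  unfolding subset_sums_def by (rule image_eqI[of _ _ "{x}"]) auto

lemma subset_sums_mono: "G \<subseteq> H \<Longrightarrow> subset_sums G \<subseteq> subset_sums H"
  unfolding subset_sums_def by blast

lemma card_subset_sums_le: "finite G \<Longrightarrow> card (subset_sums G) \<le> 2 ^ card G"
proof -
  assume "finite G"
  then have "subset_sums G = Sum ` Pow G"
    unfolding subset_sums_def by (auto intro: finite_subset)
  then show ?thesis
    using card_image_le[of "Pow G" Sum] \<open>finite G\<close> by (simp add: card_Pow)
qed

definition xi :: "(nat \<Rightarrow> 'v::comm_monoid_add) \<Rightarrow> nat \<Rightarrow> 'v galg" where
  "xi e n = of_nat (n + 1) + X (\<Sum>i=1..n. e i) + (\<Sum>i=1..n. X (e i))"

lemma pfister2_sum_eq_xi: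
  "(\<Sum>i<m. pfister2 (\<Sum>j=1..i+1. e j) (e (i + 2))) = xi e (m + 1)"
proof (induction m)
  case (Suc m)
  let ?s = "\<Sum>j=1..m+1. e j" and ?e = "e (m + 2)"
  have "(\<Sum>i<Suc m. pfister2 (\<Sum>j=1..i+1. e j) (e (i + 2)))
      = of_nat (m + 2) + X ?s + (\<Sum>j=1..m+1. X (e j)) + pfister2 ?s ?e"
    using Suc by (simp add: xi_def)
  also have "\<dots> = of_nat (m + 2) + 1 + X (?s + ?e) + ((\<Sum>j=1..m+1. X (e j)) + X ?e) + (X ?s + X ?s)"
    unfolding pfister2_expand by (simp only: ac_simps)
  also have "\<dots> = xi e (Suc m + 1)"
    by (simp add: xi_def)
  finally show ?case .
qed (simp add: xi_def numeral_2_eq_2)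

definition support_sum :: "'v::comm_monoid_add set \<Rightarrow> 'v galg \<Rightarrow> 'v" where
  "support_sum C \<xi> = \<Sum>(C \<inter> Poly_Mapping.keys \<xi>)"

lemma support_sum_zero [simp]: "support_sum C 0 = 0"
  by (simp add: support_sum_def)

lemma support_sum_X: "support_sum C (X v) = (if v \<in> C then v else 0)"
  by (simp add: support_sum_def)

lemma support_sum_one [simp]: "support_sum C 1 = 0"
  using support_sum_X[of C 0] by simp

context
  assumes add_self [simp]: "\<And>x::'v::ab_group_add. x + x = 0"
begin

lemma add_self_left [simp]: "x + (x + y) = (y::'v)"
  by (simp flip: add.assoc)

lemma sum_sym_diff:
  assumes "finite A" "finite B"
  shows "\<Sum>(sym_diff A B) = \<Sum>A + (\<Sum>B :: 'v)"
proof -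
  have "\<Sum>A + \<Sum>B = \<Sum>(A - B) + \<Sum>(B - A) + (\<Sum>(A \<inter> B) + (\<Sum>(A \<inter> B) :: 'v))"
    using assms by (simp add: sum.Int_Diff[of A _ B] sum.Int_Diff[of B _ A] Int_commute ac_simps)
  also have "\<dots> = \<Sum>(sym_diff A B)"
    using assms by (simp add: sum.union_disjoint Diff_Int_distrib2 Int_Diff)
  finally show ?thesis ..
qed

lemma subset_sums_add:
  assumes "x \<in> subset_sums G" "y \<in> subset_sums G"
  shows "x + y \<in> subset_sums (G :: 'v set)"
proof -
  obtain A B where "A \<subseteq> G" "finite A" "x = \<Sum>A" "B \<subseteq> G" "finite B" "y = \<Sum>B"
    using assms unfolding subset_sums_def by blast
  then show ?thesis
    unfolding subset_sums_def by (auto simp: sum_sym_diff[symmetric])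
qed

lemma subset_sums_sum:
  "(\<And>i. i \<in> I \<Longrightarrow> f i \<in> subset_sums G) \<Longrightarrow> (\<Sum>i\<in>I. f i) \<in> subset_sums (G :: 'v set)"
  by (induction I rule: infinite_finite_induct) (auto simp: zero_in_subset_sums subset_sums_add)

lemma subset_sums_add_cancel:
  "x + y \<in> subset_sums G \<Longrightarrow> x \<in> subset_sums G \<Longrightarrow> y \<in> subset_sums (G :: 'v set)"
proof -
  assume "x + y \<in> subset_sums G" "x \<in> subset_sums G"
  then have "x + (x + y) \<in> subset_sums G" by (rule subset_sums_add[rotated])
  then show ?thesis by (simp flip: add.assoc)
qed

lemma triple_subset_sums_insert:
  assumes y: "y \<in> subset_sums G" "y \<in> {a, b, a + b}"
  shows "\<exists>g. {a, b, a + b} \<subseteq> subset_sums (insert g (G :: 'v set))"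
proof -
  have old: "y \<in> subset_sums (insert g G)" for g
    using y(1) subset_sums_mono[of G "insert g G"] by blast
  have new: "g \<in> subset_sums (insert g G)" for g
    by (simp add: subset_sums_base)
  from y(2) consider "y = a" | "y = b" | "y = a + b" by blast
  then show ?thesis
  proof cases
    case 1
    then have "{a, b, a + b} \<subseteq> subset_sums (insert b G)"
      using old new subset_sums_add by blast
    then show ?thesis ..
  next
    case 2
    then have "{a, b, a + b} \<subseteq> subset_sums (insert a G)"
      using old new subset_sums_add by blast
    then show ?thesis ..
  next
    case 3
    then have "{a, b, a + b} \<subseteq> subset_sums (insert a G)"
      using old new subset_sums_add_cancel by blast
    then show ?thesis ..
  qed
qed

lemma ex_triple_closed_set_in_subset_sums:
  fixes u w :: "'i \<Rightarrow> 'v"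
  assumes "finite K"
  shows "\<exists>C G. x \<in> C \<and> C \<subseteq> subset_sums G \<and> finite G \<and> card G \<le> card K + 1
    \<and> (\<forall>i\<in>K. {u i, w i, u i + w i} \<inter> C \<noteq> {} \<longrightarrow> {u i, w i, u i + w i} \<subseteq> C)"
proof -
  let ?T = "\<lambda>i. {u i, w i, u i + w i}"
  \<comment> \<open>A maximal \<open>covered\<close> set of triples yields \<open>C\<close>: a triple meeting \<open>C\<close> but not inside it
    could be added at the cost of one generator\<close>
  define covered where "covered L \<longleftrightarrow> L \<subseteq> K \<and> (\<exists>G. finite G \<and> card G \<le> card L + 1
    \<and> insert x (\<Union>(?T ` L)) \<subseteq> subset_sums G)" for L
  have "covered {}"
    unfolding covered_def by (intro conjI exI[of _ "{x}"]) (auto simp: subset_sums_base)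
  moreover have "card L < card K + 1" if "covered L" for L
    using that card_mono[OF assms] unfolding covered_def by (simp add: less_Suc_eq_le)
  ultimately obtain L where "covered L" and maximal: "\<And>L'. covered L' \<Longrightarrow> card L' \<le> card L"
    using ex_has_greatest_nat[of covered "{}" card "card K + 1"] by blast
  then obtain G where L: "L \<subseteq> K" and G: "finite G" "card G \<le> card L + 1"
    and C: "insert x (\<Union>(?T ` L)) \<subseteq> subset_sums G"
    unfolding covered_def by blast
  have "finite L"
    using L assms by (rule finite_subset)
  have "?T i \<subseteq> insert x (\<Union>(?T ` L))"
    if i: "i \<in> K" "?T i \<inter> insert x (\<Union>(?T ` L)) \<noteq> {}" for i
  proof (rule ccontr)
    assume "\<not> ?thesis"
    then have "i \<notin> L" by blast
    obtain y where "y \<in> subset_sums G" "y \<in> ?T i"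
      using i(2) C by blast
    then obtain g where g: "?T i \<subseteq> subset_sums (insert g G)"
      using triple_subset_sums_insert by blast
    have "subset_sums G \<subseteq> subset_sums (insert g G)"
      by (rule subset_sums_mono) blast
    then have "insert x (\<Union>(?T ` insert i L)) \<subseteq> subset_sums (insert g G)"
      using C g by blast
    moreover have "card (insert g G) \<le> card (insert i L) + 1"
      using G \<open>finite L\<close> \<open>i \<notin> L\<close> by (simp add: card_insert_if)
    ultimately have "covered (insert i L)"
      unfolding covered_def using i(1) L G(1) by blast
    then show False
      using maximal[of "insert i L"] \<open>finite L\<close> \<open>i \<notin> L\<close> by simp
  qed
  then have "\<forall>i\<in>K. ?T i \<inter> insert x (\<Union>(?T ` L)) \<noteq> {} \<longrightarrow> ?T i \<subseteq> insert x (\<Union>(?T ` L))"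
    by blast
  moreover have "card G \<le> card K + 1"
    using G(2) card_mono[OF assms L] by simp
  ultimately show ?thesis
    using C G(1) by (intro exI[of _ "insert x (\<Union>(?T ` L))"] exI[of _ G]) simp
qed

lemma support_sum_add: "support_sum C (\<xi> + \<eta>) = support_sum C \<xi> + support_sum (C :: 'v set) \<eta>"
proof -
  have "C \<inter> Poly_Mapping.keys (\<xi> + \<eta>)
      = sym_diff (C \<inter> Poly_Mapping.keys \<xi>) (C \<inter> Poly_Mapping.keys \<eta>)"
    by (auto simp: keys_add_galg)
  then show ?thesis
    unfolding support_sum_def by (simp add: sum_sym_diff)
qed

lemma support_sum_sum: "support_sum C (\<Sum>i\<in>I. f i) = (\<Sum>i\<in>I. support_sum (C :: 'v set) (f i))"
  by (induction I rule: infinite_finite_induct) (simp_all add: support_sum_add)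

lemma support_sum_of_nat: "support_sum (C :: 'v set) (of_nat m) = 0"
  by (induction m) (simp_all add: support_sum_add)

lemma support_sum_pfister2:
  assumes "{u, w, u + w} \<subseteq> C \<or> {u, w, u + w} \<inter> C = {}"
  shows "support_sum (C :: 'v set) (pfister2 u w) = 0"
proof -
  have "u + (w + (u + w)) = 0"
    using add_self[of "u + w"] by (simp add: ac_simps)
  then show ?thesis
    using assms by (auto simp: pfister2_expand support_sum_add support_sum_X add.assoc)
qed

lemma support_sum_xi:
  assumes "(\<Sum>i=1..n. e i) \<in> C"
  shows "support_sum C (xi e n) = (\<Sum>i\<in>{i\<in>{1..n}. e i \<notin> C}. e i :: 'v)"
proof -
  let ?I = "{1..n}" and ?D = "{i\<in>{1..n}. e i \<notin> C}"
  have "support_sum C (xi e n) = (\<Sum>i\<in>?I. e i) + (\<Sum>i\<in>?I \<inter> {i. e i \<in> C}. e i)"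
    using assms by (simp add: xi_def support_sum_add support_sum_of_nat support_sum_sum
        support_sum_X sum.If_cases)
  also have "?I \<inter> {i. e i \<in> C} = ?I - ?D"
    by blast
  also have "(\<Sum>i\<in>?I. e i) = (\<Sum>i\<in>?I - ?D. e i) + (\<Sum>i\<in>?D. e i)"
    by (rule sum.subset_diff) auto
  finally show ?thesis
    by (simp add: ac_simps)
qed

lemma pfister2_length_lower_bound:
  fixes e u w :: "nat \<Rightarrow> 'v"
  assumes basis: "bij_betw (\<lambda>S. \<Sum>i\<in>S. e i) (Pow {1..n}) UNIV"
    and rep: "xi e n = (\<Sum>i<k. pfister2 (u i) (w i))"
  shows "n \<le> k + 1"
proof -
  let ?T = "\<lambda>i. {u i, w i, u i + w i}"
  obtain C G where e0: "(\<Sum>i=1..n. e i) \<in> C" and C: "C \<subseteq> subset_sums G"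
    and G: "finite G" "card G \<le> k + 1" and closed: "\<forall>i<k. ?T i \<inter> C \<noteq> {} \<longrightarrow> ?T i \<subseteq> C"
    using ex_triple_closed_set_in_subset_sums[of "{..<k}" "\<Sum>i=1..n. e i" u w] by auto
  have "support_sum C (xi e n) = 0"
    unfolding rep support_sum_sum using closed by (auto intro!: sum.neutral support_sum_pfister2)
  then have "(\<Sum>i\<in>{i\<in>{1..n}. e i \<notin> C}. e i) = (\<Sum>i\<in>{}. e i)"
    using support_sum_xi[OF e0] by simp
  moreover have "{i\<in>{1..n}. e i \<notin> C} \<in> Pow {1..n}"
    by auto
  ultimately have "{i\<in>{1..n}. e i \<notin> C} = {}"
    using inj_onD[OF bij_betw_imp_inj_on[OF basis]] by blast
  then have "e i \<in> subset_sums G" if "i \<in> {1..n}" for i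
    using that C by blast
  then have "(\<Sum>i\<in>S. e i) \<in> subset_sums G" if "S \<in> Pow {1..n}" for S
    using that by (intro subset_sums_sum) auto
  then have "(\<lambda>S. \<Sum>i\<in>S. e i) ` Pow {1..n} \<subseteq> subset_sums G"
    by blast
  then have "subset_sums G = UNIV"
    using bij_betw_imp_surj_on[OF basis] by (simp add: top.extremum_unique)
  then have "(2::nat) ^ n \<le> 2 ^ card G"
    using bij_betw_same_card[OF basis] card_subset_sums_le[OF G(1)] by (simp add: card_Pow)
  also have "\<dots> \<le> 2 ^ (k + 1)"
    using G(2) by (rule power_increasing) simp
  finally show ?thesis
    by (rule power_le_imp_le_exp[rotated]) simp
qed

end

theorem proposition1p4:
  fixes n :: nat and e :: "nat \<Rightarrow> 'v::ab_group_add"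
  assumes char2: "\<And>x::'v. x + x = 0"
    and n_gt: "n > 1"
    and basis: "bij_betw (\<lambda>S. \<Sum>i\<in>S. e i) (Pow {1..n}) (UNIV :: 'v set)"
  shows "(let e0 = (\<Sum>i=1..n. e i);
              \<xi> = of_nat (n + 1) + X e0 + (\<Sum>i=1..n. X (e i)) :: 'v galg
          in \<xi> \<in> augI2 \<and> Pf2 \<xi> = n - 1)"
proof -
  have rep: "xi e n = (\<Sum>i<n - 1. pfister2 (\<Sum>j=1..i+1. e j) (e (i + 2)))"
    using pfister2_sum_eq_xi[where m = "n - 1" and e = e] n_gt by simp
  have "Pf2 (xi e n) = n - 1"
    unfolding Pf2_def
  proof (rule Least_equality)
    show "\<exists>u w. xi e n = (\<Sum>i<n - 1. pfister2 (u i) (w i))"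
      by (intro exI) (rule rep)
    show "n - 1 \<le> k" if "\<exists>u w. xi e n = (\<Sum>i<k. pfister2 (u i) (w i))" for k
      using that pfister2_length_lower_bound[OF char2 basis] by fastforce
  qed
  moreover have "xi e n \<in> augI2"
    unfolding rep by (rule pfister2_sum_in_augI2)
  ultimately show ?thesis
    by (simp add: xi_def)
qed

end
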